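(* Consider $\min_{x\in\mathbb{R}^n}\max_{y\in\mathbb{R}^m}f(x,y)$ with $f$ twice differentiable at $(\bar x,\bar y)$. (a) If $\nabla f(\bar x,\bar y)=0$, $\nabla^2_{yy}f(\bar x,\bar y)\prec0$, and for every $u\in\mathbb{R}^n\setminus\{0\}$ there exists $h\in\mathbb{R}^m$ with $\nabla^2f(\bar x,\bar y)((u,h),(u,h))>0$, then $(\bar x,\bar y)$ is a calm local minimax point. (b) If $(\bar x,\bar y)$ is a calm local minimax point, then $\nabla f(\bar x,\bar y)=0$, $\nabla^2_{yy}f(\bar x,\bar y)\preceq0$, and for every $u\in\mathbb{R}^n$ there exists $h\in\mathbb{R}^m$ with $\nabla^2f(\bar x,\bar y)((u,h),(u,h))\ge0$.
   Context: $f:\mathbb{R}^n\times\mathbb{R}^m\to\mathbb{R}$; $\nabla^2f(\bar x,\bar y)((u,h),(u,h))$ denotes the quadratic form of the full Hessian of $f$ at $(\bar x,\bar y)$ applied to $(u,h)$. Standing assumption: for every $x$, $\bar y$ and $\epsilon\ge0$ the maximum of $f(x,\cdot)$ over $\mathbb{B}_\epsilon(\bar y)$ is attained, where $\mathbb{B}_\epsilon(z)$ is the closed Euclidean ball. A radius function is $\tau:[0,\infty)\to[0,\infty)$ with $\tau(0)=0$, $\tau(\delta)\to0$ as $\delta\downarrow0$; calm at $0$ if $\tau(\delta)\le\kappa\delta$ on $[0,\delta_1]$ for some $\kappa,\delta_1>0$. $(\bar x,\bar y)$ is a calm local minimax point if there exist $\delta_0>0$ and a radius function $\tau$ calm at $0$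 with $f(\bar x,y)\le f(\bar x,\bar y)\le\max_{y'\in\mathbb{B}_{\tau(\delta)}(\bar y)}f(x,y')$ for all $\delta\in(0,\delta_0]$, $x\in\mathbb{B}_\delta(\bar x)$, $y\in\mathbb{B}_\delta(\bar y)$. $A\prec0$ ($\preceq0$) means negative definite (semidefinite). *)

theory Defs
  imports "HOL-Analysis.Analysis"
begin

text \<open>Then the gradient at z is g z and the Hessian quadratic form is v \<mapsto> H v \<bullet> v.\<close>
definition twice_diff_with ::
  "('c::euclidean_space \<Rightarrow> real) \<Rightarrow> 'c \<Rightarrow> ('c \<Rightarrow> 'c) \<Rightarrow> ('c \<Rightarrow> 'c) \<Rightarrow> bool" where
  "twice_diff_with f z g H \<longleftrightarrow>
     (\<exists>S. open S \<and> z \<in> S \<and> (\<forall>w\<in>S. (f has_derivative (\<lambda>v. g w \<bullet> v)) (at w)))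
     \<and> (g has_derivative H) (at z)"

definition hess_yy :: "('a::euclidean_space \<times> 'b::euclidean_space \<Rightarrow> 'a \<times> 'b) \<Rightarrow> 'b \<Rightarrow> 'b" where
  "hess_yy H = (\<lambda>h. snd (H (0, h)))"

definition neg_definite :: "('b::euclidean_space \<Rightarrow> 'b) \<Rightarrow> bool" where
  "neg_definite A \<longleftrightarrow> (\<forall>h. h \<noteq> 0 \<longrightarrow> A h \<bullet> h < 0)"

definition neg_semidefinite :: "('b::euclidean_space \<Rightarrow> 'b) \<Rightarrow> bool" where
  "neg_semidefinite A \<longleftrightarrow> (\<forall>h. A h \<bullet> h \<le> 0)"

definition radius_function :: "(real \<Rightarrow> real) \<Rightarrow> bool" where
  "radius_function \<tau> \<longleftrightarrow> \<tau> 0 = 0 \<and> (\<forall>\<delta>\<ge>0. \<tau> \<delta> \<ge> 0) \<and> (\<tau> \<longlongrightarrow> 0) (at_right 0)"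

definition calm_at_0 :: "(real \<Rightarrow> real) \<Rightarrow> bool" where
  "calm_at_0 \<tau> \<longleftrightarrow> (\<exists>\<kappa>>0. \<exists>\<delta>1>0. \<forall>\<delta>\<in>{0..\<delta>1}. \<tau> \<delta> \<le> \<kappa> * \<delta>)"

definition calm_local_minimax ::
  "('a::euclidean_space \<times> 'b::euclidean_space \<Rightarrow> real) \<Rightarrow> 'a \<Rightarrow> 'b \<Rightarrow> bool" where
  "calm_local_minimax f xb yb \<longleftrightarrow>
     (\<exists>\<delta>0>0. \<exists>\<tau>. radius_function \<tau> \<and> calm_at_0 \<tau> \<and>
        (\<forall>\<delta>\<in>{0<..\<delta>0}. \<forall>x\<in>cball xb \<delta>. \<forall>y\<in>cball yb \<delta>.
            f (xb, y) \<le> f (xb, yb) \<and>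
            f (xb, yb) \<le> (SUP y'\<in>cball yb (\<tau> \<delta>). f (x, y'))))"

end

theory Submission
  imports Defs
begin

text \<open>(a) By the second-order Taylor expansion at (xb, yb), negative definiteness of the yy-block
  makes yb a local maximizer of f(xb, -). Compactness of the unit sphere turns the pointwise
  positivity condition into a uniform one: every u has a response h with |h| <= R |u| and
  H(u,h).(u,h) >= c |u|^2, so f(xb + u, yb + h) >= f(xb, yb) for small u, and the radius function
  tau(delta) = R delta works.

  (b) Calmness gives, for every direction u and small t > 0, a maximizer of f(xb + t u, -) of the
  form yb + t h with |h| <= kappa |u|, hence f(xb, yb) <= f((xb, yb) + t (u, h)). Comparing with the
  Taylor expansion along rays whose directions range over a compact set yields the first- and
  second-order conditions in x; those in y come the same way from the local maximality of
  f(xb, -), applied to -f.\<close>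

lemma nonpos_if_eventually_le_mult:
  fixes a K :: real
  assumes "\<forall>\<^sub>F t in at_right 0. a \<le> t * K"
  shows "a \<le> 0"
proof -
  have "((\<lambda>t. t * K) \<longlongrightarrow> 0) (at_right (0::real))"
    by (intro tendsto_mult_left_zero tendsto_ident_at)
  from tendsto_le[OF trivial_limit_at_right_real this tendsto_const assms] show ?thesis .
qed

lemma nonpos_if_le_mult_all_pos:
  fixes a K :: real
  assumes "\<And>e. 0 < e \<Longrightarrow> a \<le> e * K"
  shows "a \<le> 0"
proof (rule nonpos_if_eventually_le_mult)
  show "\<forall>\<^sub>F e in at_right 0. a \<le> e * K"
    using assms by (intro eventually_at_rightI[of 0 1]) auto
qed

lemma bounded_linear_quadratic_bound:
  assumes "bounded_linear H"
  shows "\<exists>B>0. \<forall>v. \<bar>H v \<bullet> v\<bar> \<le> B * (norm v)\<^sup>2"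
proof -
  obtain K where K: "K > 0" "\<And>v. norm (H v) \<le> norm v * K"
    using bounded_linear.pos_bounded[OF assms] by blast
  have "\<bar>H v \<bullet> v\<bar> \<le> K * (norm v)\<^sup>2" for v
  proof -
    have "\<bar>H v \<bullet> v\<bar> \<le> norm (H v) * norm v" by (rule Cauchy_Schwarz_ineq2)
    also have "\<dots> \<le> norm v * K * norm v" using K by (intro mult_right_mono) auto
    finally show ?thesis by (simp add: power2_eq_square mult_ac)
  qed
  thus ?thesis using K(1) by blast
qed

lemma bounded_linear_hess_yy:
  fixes H :: "'a::euclidean_space \<times> 'b::euclidean_space \<Rightarrow> 'a \<times> 'b"
  assumes "bounded_linear H"
  shows "bounded_linear (hess_yy H)"
  unfolding hess_yy_def
  by (intro bounded_linear_compose[OF bounded_linear_snd]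
      bounded_linear_compose[OF assms] bounded_linear_Pair bounded_linear_zero bounded_linear_ident)

lemma neg_definite_uniform:
  fixes A :: "'b::euclidean_space \<Rightarrow> 'b"
  assumes lin: "bounded_linear A" and neg: "neg_definite A"
  shows "\<exists>c>0. \<forall>h. A h \<bullet> h \<le> - c * (norm h)\<^sup>2"
proof -
  interpret A: bounded_linear A by (fact lin)
  obtain b :: 'b where "b \<in> Basis" using nonempty_Basis by blast
  hence "sphere (0::'b) 1 \<noteq> {}" by (auto intro!: exI[of _ b])
  moreover have "continuous_on (sphere 0 1) (\<lambda>h. A h \<bullet> h)"
    by (intro continuous_intros linear_continuous_on lin)
  ultimately obtain m where m: "m \<in> sphere 0 1" "\<And>h. h \<in> sphere 0 1 \<Longrightarrow> A h \<bullet> h \<le> A m \<bullet> m"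
    using continuous_attains_sup[OF compact_sphere] by blast
  have "m \<noteq> 0" using m(1) by auto
  hence "A m \<bullet> m < 0" using neg unfolding neg_definite_def by blast
  moreover have "A h \<bullet> h \<le> - (- (A m \<bullet> m)) * (norm h)\<^sup>2" for h
  proof (cases "h = 0")
    case False
    define w where "w = (1 / norm h) *\<^sub>R h"
    have "w \<in> sphere 0 1" using False by (simp add: w_def)
    have "A h \<bullet> h = (norm h)\<^sup>2 * (A w \<bullet> w)"
      using False by (simp add: w_def A.scaleR power2_eq_square)
    also have "\<dots> \<le> (norm h)\<^sup>2 * (A m \<bullet> m)" using m(2)[OF \<open>w \<in> sphere 0 1\<close>] by (simp add: mult_left_mono)
    finally show ?thesis by (simp add: mult.commute)
  qed (simp add: A.zero)
  ultimately show ?thesis by (intro exI[of _ "- (A m \<bullet> m)"]) auto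
qed

lemma pos_in_some_direction_uniform_sphere:
  fixes H :: "'a::euclidean_space \<times> 'b::euclidean_space \<Rightarrow> 'a \<times> 'b"
  assumes lin: "bounded_linear H" and pos: "\<And>u. u \<noteq> 0 \<Longrightarrow> \<exists>h. 0 < H (u, h) \<bullet> (u, h)"
  shows "\<exists>c>0. \<exists>R>0. \<forall>w\<in>sphere 0 1. \<exists>h. norm h \<le> R \<and> c \<le> H (w, h) \<bullet> (w, h)"
proof -
  define q where "q u h = H (u, h) \<bullet> (u, h)" for u h
  define hh where "hh u = (SOME h. 0 < q u h)" for u
  have hh: "0 < q u (hh u)" if "u \<in> sphere 0 1" for u
  proof -
    have "u \<noteq> 0" using that by auto
    from someI_ex[OF pos[OF this]] show ?thesis unfolding hh_def q_def .
  qed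
  \<comment> \<open>Each unit vector u is positive along the witness hh u on an open neighbourhood U u;
      finitely many such neighbourhoods cover the unit sphere.\<close>
  define U where "U u = {v. q u (hh u) / 2 < q v (hh u)}" for u
  have "continuous_on UNIV (\<lambda>v. q v h)" for h
    unfolding q_def
    by (intro continuous_intros continuous_on_compose2[OF linear_continuous_on[OF lin]]) auto
  hence "open (U u)" for u
    unfolding U_def by (intro open_Collect_less continuous_intros)
  moreover have "sphere 0 1 \<subseteq> \<Union> (U ` sphere 0 1)"
    using hh by (force simp: U_def)
  ultimately obtain T where T: "T \<subseteq> sphere 0 1" "finite T" "sphere 0 1 \<subseteq> \<Union> (U ` T)"
    using compactE_image[OF compact_sphere] by metis
  define c where "c = Min (insert 1 ((\<lambda>u. q u (hh u) / 2) ` T))"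
  define R where "R = Max (insert 1 ((\<lambda>u. norm (hh u)) ` T))"
  have "\<exists>h. norm h \<le> R \<and> c \<le> q w h" if w: "w \<in> sphere 0 1" for w
  proof -
    obtain s where s: "s \<in> T" "w \<in> U s" using T(3) w by blast
    have "c \<le> q s (hh s) / 2" unfolding c_def using T(2) s(1) by (intro Min_le) auto
    hence "c \<le> q w (hh s)" using s(2) by (simp add: U_def)
    moreover have "norm (hh s) \<le> R" unfolding R_def using T(2) s(1) by (intro Max_ge) auto
    ultimately show ?thesis by blast
  qed
  moreover have "0 < c" unfolding c_def using T hh by (auto simp: Min_gr_iff)
  moreover have "0 < R" unfolding R_def using T(2) by (simp add: Max_gr_iff)
  ultimately show ?thesis unfolding q_def by blast
qed

lemma pos_in_some_direction_uniform:
  fixes H :: "'a::euclidean_space \<times> 'b::euclidean_space \<Rightarrow> 'a \<times> 'b"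
  assumes lin: "bounded_linear H" and pos: "\<And>u. u \<noteq> 0 \<Longrightarrow> \<exists>h. 0 < H (u, h) \<bullet> (u, h)"
  shows "\<exists>c>0. \<exists>R>0. \<forall>u. \<exists>h. norm h \<le> R * norm u \<and> c * (norm u)\<^sup>2 \<le> H (u, h) \<bullet> (u, h)"
proof -
  interpret H: bounded_linear H by (fact lin)
  obtain c R where c: "c > 0" and R: "R > 0"
    and sphere: "\<And>w. w \<in> sphere 0 1 \<Longrightarrow> \<exists>h. norm h \<le> R \<and> c \<le> H (w, h) \<bullet> (w, h)"
    using pos_in_some_direction_uniform_sphere[OF lin pos] by blast
  have "\<exists>h. norm h \<le> R * norm u \<and> c * (norm u)\<^sup>2 \<le> H (u, h) \<bullet> (u, h)" for u
  proof (cases "u = 0")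
    case False
    define w where "w = (1 / norm u) *\<^sub>R u"
    have "w \<in> sphere 0 1" using False by (simp add: w_def)
    then obtain h where h: "norm h \<le> R" "c \<le> H (w, h) \<bullet> (w, h)" using sphere by blast
    have "(u, norm u *\<^sub>R h) = norm u *\<^sub>R (w, h)" using False by (simp add: w_def)
    hence "H (u, norm u *\<^sub>R h) \<bullet> (u, norm u *\<^sub>R h) = (norm u)\<^sup>2 * (H (w, h) \<bullet> (w, h))"
      by (simp only: H.scaleR inner_scaleR_left inner_scaleR_right) (simp add: power2_eq_square)
    moreover have "norm (norm u *\<^sub>R h) \<le> R * norm u" using h(1) by (simp add: mult.commute[of R] mult_left_mono)
    ultimately show ?thesis using h(2) by (metis mult.commute mult_left_mono zero_le_power2)
  qed (auto simp: H.zero[unfolded zero_prod_def] intro!: exI[of _ 0])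
  thus ?thesis using c R by blast
qed

lemma twice_diff_with_bounded_linear:
  assumes "twice_diff_with f z g H"
  shows "bounded_linear H"
  using assms unfolding twice_diff_with_def by (blast intro: has_derivative_bounded_linear)

lemma mean_value_second_order:
  fixes f :: "'c::euclidean_space \<Rightarrow> real"
  assumes df: "\<And>t. t \<in> {0..1} \<Longrightarrow> (f has_derivative (\<lambda>w. g (z + t *\<^sub>R v) \<bullet> w)) (at (z + t *\<^sub>R v))"
    and lin: "bounded_linear H"
  shows "\<exists>\<xi>. 0 < \<xi> \<and> \<xi> < 1 \<and>
           f (z + v) - f z - g z \<bullet> v - H v \<bullet> v / 2 = (g (z + \<xi> *\<^sub>R v) - g z - H (\<xi> *\<^sub>R v)) \<bullet> v"
proof -
  interpret H: bounded_linear H by (fact lin)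
  define \<phi> where "\<phi> t = f (z + t *\<^sub>R v) - t * (g z \<bullet> v) - t\<^sup>2 / 2 * (H v \<bullet> v)" for t
  define \<phi>' where "\<phi>' t = (g (z + t *\<^sub>R v) - g z - H (t *\<^sub>R v)) \<bullet> v" for t
  have "(\<phi> has_real_derivative \<phi>' t) (at t)" if t: "0 \<le> t" "t \<le> 1" for t
  proof -
    have "((\<lambda>t. z + t *\<^sub>R v) has_derivative (\<lambda>s. s *\<^sub>R v)) (at t)"
      by (auto intro!: derivative_eq_intros)
    from has_derivative_compose[OF this df] t
    have "((\<lambda>t. f (z + t *\<^sub>R v)) has_derivative (\<lambda>s. g (z + t *\<^sub>R v) \<bullet> (s *\<^sub>R v))) (at t)" by simp
    hence "((\<lambda>t. f (z + t *\<^sub>R v)) has_real_derivative g (z + t *\<^sub>R v) \<bullet> v) (at t)"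
      by (simp add: has_field_derivative_def mult.commute[of _ "g _ \<bullet> v"])
    thus ?thesis unfolding \<phi>_def \<phi>'_def
      by (auto intro!: derivative_eq_intros simp: H.scaleR inner_diff_left)
  qed
  then obtain \<xi> where "0 < \<xi>" "\<xi> < 1" "\<phi> 1 - \<phi> 0 = \<phi>' \<xi>"
    using MVT2[of 0 1 \<phi> \<phi>'] by auto
  thus ?thesis by (intro exI[of _ \<xi>]) (simp add: \<phi>_def \<phi>'_def)
qed

lemma twice_diff_with_taylor:
  fixes f :: "'c::euclidean_space \<Rightarrow> real"
  assumes twice: "twice_diff_with f z g H" and e: "\<epsilon> > 0"
  shows "\<exists>r>0. \<forall>v. norm v < r \<longrightarrow>
           \<bar>f (z + v) - f z - g z \<bullet> v - H v \<bullet> v / 2\<bar> \<le> \<epsilon> * (norm v)\<^sup>2"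
proof -
  from twice obtain S where S: "open S" "z \<in> S" "\<forall>w\<in>S. (f has_derivative (\<lambda>v. g w \<bullet> v)) (at w)"
    and dg: "(g has_derivative H) (at z)" unfolding twice_diff_with_def by blast
  from dg e obtain d where d: "d > 0"
    "\<And>y. norm (y - z) < d \<Longrightarrow> norm (g y - g z - H (y - z)) \<le> \<epsilon> * norm (y - z)"
    unfolding has_derivative_at_alt by blast
  from S obtain d0 where d0: "d0 > 0" "ball z d0 \<subseteq> S" using open_contains_ball by blast
  have "\<bar>f (z + v) - f z - g z \<bullet> v - H v \<bullet> v / 2\<bar> \<le> \<epsilon> * (norm v)\<^sup>2"
    if v: "norm v < min d d0" for v
  proof -
    have "z + t *\<^sub>R v \<in> S" if "t \<in> {0..1}" for t
      using that v d0 mult_left_le_one_le[of "norm v" t] by (auto simp: dist_norm)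
    then obtain \<xi> where \<xi>: "0 < \<xi>" "\<xi> < 1" and
      mv: "f (z + v) - f z - g z \<bullet> v - H v \<bullet> v / 2 = (g (z + \<xi> *\<^sub>R v) - g z - H (\<xi> *\<^sub>R v)) \<bullet> v"
      using mean_value_second_order[OF _ twice_diff_with_bounded_linear[OF twice]] S(3) by blast
    have "norm (z + \<xi> *\<^sub>R v - z) < d" using \<xi> v mult_left_le_one_le[of "norm v" \<xi>] by auto
    from d(2)[OF this] have "norm (g (z + \<xi> *\<^sub>R v) - g z - H (\<xi> *\<^sub>R v)) \<le> \<epsilon> * (\<xi> * norm v)"
      using \<xi> by simp
    hence "\<bar>f (z + v) - f z - g z \<bullet> v - H v \<bullet> v / 2\<bar> \<le> \<epsilon> * (\<xi> * norm v) * norm v"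
      unfolding mv by (rule order_trans[OF Cauchy_Schwarz_ineq2 mult_right_mono]) simp
    also have "\<dots> \<le> \<epsilon> * (norm v)\<^sup>2"
      using \<xi> e mult_left_le_one_le[of "\<epsilon> * (norm v)\<^sup>2" \<xi>] by (simp add: power2_eq_square mult_ac)
    finally show ?thesis .
  qed
  moreover have "min d d0 > 0" using d d0 by simp
  ultimately show ?thesis by blast
qed

lemma twice_diff_with_taylor_rays:
  fixes f :: "'c::euclidean_space \<Rightarrow> real"
  assumes twice: "twice_diff_with f z g H" and K: "bounded K" and e: "\<epsilon> > 0"
  shows "\<forall>\<^sub>F t in at_right 0. \<forall>v\<in>K.
           \<bar>f (z + t *\<^sub>R v) - f z - t * (g z \<bullet> v) - t\<^sup>2 * (H v \<bullet> v) / 2\<bar> \<le> \<epsilon> * t\<^sup>2 * (norm v)\<^sup>2"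
proof -
  obtain r where r: "r > 0" "\<And>v. norm v < r \<Longrightarrow>
      \<bar>f (z + v) - f z - g z \<bullet> v - H v \<bullet> v / 2\<bar> \<le> \<epsilon> * (norm v)\<^sup>2"
    using twice_diff_with_taylor[OF twice e] by blast
  obtain N where N: "N > 0" "\<And>v. v \<in> K \<Longrightarrow> norm v \<le> N" using K bounded_pos by blast
  interpret H: bounded_linear H
    using twice by (rule twice_diff_with_bounded_linear)
  show ?thesis
  proof (rule eventually_at_rightI[of 0 "r / N"])
    fix t assume t: "t \<in> {0<..<r / N}"
    show "\<forall>v\<in>K. \<bar>f (z + t *\<^sub>R v) - f z - t * (g z \<bullet> v) - t\<^sup>2 * (H v \<bullet> v) / 2\<bar>
                 \<le> \<epsilon> * t\<^sup>2 * (norm v)\<^sup>2"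
    proof
      fix v assume "v \<in> K"
      have "t * norm v \<le> t * N" using N \<open>v \<in> K\<close> t by (intro mult_left_mono) auto
      also have "\<dots> < r" using t N by (simp add: field_simps)
      finally have "norm (t *\<^sub>R v) < r" using t by simp
      from r(2)[OF this] show "\<bar>f (z + t *\<^sub>R v) - f z - t * (g z \<bullet> v) - t\<^sup>2 * (H v \<bullet> v) / 2\<bar>
                 \<le> \<epsilon> * t\<^sup>2 * (norm v)\<^sup>2"
        using t by (simp add: H.scaleR power2_eq_square mult_ac)
    qed
  qed (use r N in auto)
qed

lemma twice_diff_with_uminus:
  assumes "twice_diff_with f z g H"
  shows "twice_diff_with (\<lambda>w. - f w) z (\<lambda>w. - g w) (\<lambda>v. - H v)"
proof -
  have "(\<lambda>v. - (g w \<bullet> v)) = (\<lambda>v. - g w \<bullet> v)" for w by simp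
  thus ?thesis using assms unfolding twice_diff_with_def
    by (metis has_derivative_minus)
qed

lemma min_along_rays_first_order:
  fixes f :: "'c::euclidean_space \<Rightarrow> real"
  assumes twice: "twice_diff_with f z g H" and K: "compact K" "K \<noteq> {}"
    and ray_min: "\<forall>\<^sub>F t in at_right 0. \<exists>v\<in>K. f z \<le> f (z + t *\<^sub>R v)"
  shows "\<exists>v\<in>K. 0 \<le> g z \<bullet> v"
proof -
  have "continuous_on K (\<lambda>v. g z \<bullet> v)" by (intro continuous_intros)
  then obtain vm where vm: "vm \<in> K" "\<And>v. v \<in> K \<Longrightarrow> g z \<bullet> v \<le> g z \<bullet> vm"
    using continuous_attains_sup[OF K] by blast
  from twice_diff_with_bounded_linear[OF twice] obtain B where B: "B > 0" "\<And>v. \<bar>H v \<bullet> v\<bar> \<le> B * (norm v)\<^sup>2"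
    using bounded_linear_quadratic_bound by blast
  obtain N where N: "N > 0" "\<And>v. v \<in> K \<Longrightarrow> norm v \<le> N"
    using compact_imp_bounded[OF K(1)] bounded_pos by blast
  define C where "C = (B / 2 + 1) * N\<^sup>2"
  have "- (g z \<bullet> vm) \<le> 0"
  proof (rule nonpos_if_eventually_le_mult)
    show "\<forall>\<^sub>F t in at_right 0. - (g z \<bullet> vm) \<le> t * C"
      using ray_min eventually_at_right_less
        twice_diff_with_taylor_rays[OF twice compact_imp_bounded[OF K(1)] zero_less_one]
    proof eventually_elim
      case (elim t)
      then obtain v where v: "v \<in> K" "f z \<le> f (z + t *\<^sub>R v)" by blast
      have "H v \<bullet> v / 2 + (norm v)\<^sup>2 \<le> B * (norm v)\<^sup>2 / 2 + (norm v)\<^sup>2"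
        using B(2)[of v] by linarith
      also have "\<dots> = (B / 2 + 1) * (norm v)\<^sup>2" by (simp add: algebra_simps)
      also have "\<dots> \<le> C"
        unfolding C_def using N v(1) B(1) by (intro mult_left_mono power_mono) auto
      finally have quad: "H v \<bullet> v / 2 + (norm v)\<^sup>2 \<le> C" .
      have "0 \<le> t * (g z \<bullet> v) + t\<^sup>2 * (H v \<bullet> v / 2 + (norm v)\<^sup>2)"
        using v elim(3) by (auto simp: algebra_simps)
      also have "\<dots> \<le> t * (g z \<bullet> vm) + t\<^sup>2 * C"
        using vm(2)[OF v(1)] quad elim(2) by (intro add_mono mult_left_mono) auto
      also have "\<dots> = t * (g z \<bullet> vm + t * C)" by (simp add: power2_eq_square algebra_simps)
      finally show ?case using elim(2) by (simp add: zero_le_mult_iff)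
    qed
  qed
  thus ?thesis using vm(1) by auto
qed

lemma min_along_rays_second_order:
  fixes f :: "'c::euclidean_space \<Rightarrow> real"
  assumes twice: "twice_diff_with f z g H" and K: "compact K" "K \<noteq> {}"
    and stationary: "\<And>v. v \<in> K \<Longrightarrow> g z \<bullet> v = 0"
    and ray_min: "\<forall>\<^sub>F t in at_right 0. \<exists>v\<in>K. f z \<le> f (z + t *\<^sub>R v)"
  shows "\<exists>v\<in>K. 0 \<le> H v \<bullet> v"
proof -
  interpret H: bounded_linear H
    using twice by (rule twice_diff_with_bounded_linear)
  have "continuous_on K (\<lambda>v. H v \<bullet> v)"
    by (intro continuous_intros linear_continuous_on H.bounded_linear_axioms)
  then obtain vm where vm: "vm \<in> K" "\<And>v. v \<in> K \<Longrightarrow> H v \<bullet> v \<le> H vm \<bullet> vm"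
    using continuous_attains_sup[OF K] by blast
  obtain N where N: "N > 0" "\<And>v. v \<in> K \<Longrightarrow> norm v \<le> N"
    using compact_imp_bounded[OF K(1)] bounded_pos by blast
  have "- (H vm \<bullet> vm) \<le> 0"
  proof (rule nonpos_if_le_mult_all_pos)
    fix e :: real assume e: "e > 0"
    have "\<forall>\<^sub>F t in at_right 0. 0 < t \<and> 0 \<le> t\<^sup>2 * (H vm \<bullet> vm / 2 + e * N\<^sup>2)"
      using eventually_at_right_less ray_min
        twice_diff_with_taylor_rays[OF twice compact_imp_bounded[OF K(1)] e]
    proof eventually_elim
      case (elim t)
      then obtain v where v: "v \<in> K" "f z \<le> f (z + t *\<^sub>R v)" by blast
      have "e * (norm v)\<^sup>2 \<le> e * N\<^sup>2" using N v(1) e by (intro mult_left_mono power_mono) auto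
      hence "H v \<bullet> v / 2 + e * (norm v)\<^sup>2 \<le> H vm \<bullet> vm / 2 + e * N\<^sup>2"
        using vm(2)[OF v(1)] by linarith
      hence "t\<^sup>2 * (H v \<bullet> v / 2 + e * (norm v)\<^sup>2) \<le> t\<^sup>2 * (H vm \<bullet> vm / 2 + e * N\<^sup>2)"
        by (rule mult_left_mono) simp
      moreover have "t\<^sup>2 * (H v \<bullet> v / 2 + e * (norm v)\<^sup>2) = t\<^sup>2 * (H v \<bullet> v) / 2 + e * t\<^sup>2 * (norm v)\<^sup>2"
        by (simp add: algebra_simps)
      moreover have "0 \<le> t\<^sup>2 * (H v \<bullet> v) / 2 + e * t\<^sup>2 * (norm v)\<^sup>2"
        using v(2) elim(3)[rule_format, OF v(1)] stationary[OF v(1)] by (simp add: abs_le_iff)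
      ultimately show ?case using elim(1) by linarith
    qed
    then obtain t where "0 < t" "0 \<le> t\<^sup>2 * (H vm \<bullet> vm / 2 + e * N\<^sup>2)"
      using eventually_happens'[OF trivial_limit_at_right_real] by blast
    hence "0 \<le> H vm \<bullet> vm / 2 + e * N\<^sup>2" by (simp add: zero_le_mult_iff)
    thus "- (H vm \<bullet> vm) \<le> e * (2 * N\<^sup>2)" by simp
  qed
  thus ?thesis using vm(1) by auto
qed

lemma local_max_y_if_neg_definite:
  fixes f :: "'a::euclidean_space \<times> 'b::euclidean_space \<Rightarrow> real"
  assumes twice: "twice_diff_with f (xb, yb) g H" and g0: "g (xb, yb) = 0"
    and neg: "neg_definite (hess_yy H)"
  shows "\<exists>r>0. \<forall>y. norm (y - yb) < r \<longrightarrow> f (xb, y) \<le> f (xb, yb)"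
proof -
  from twice_diff_with_bounded_linear[OF twice] obtain c where c: "c > 0" "\<And>h. hess_yy H h \<bullet> h \<le> - c * (norm h)\<^sup>2"
    using neg_definite_uniform[OF bounded_linear_hess_yy neg] by blast
  obtain r where r: "r > 0" "\<And>v. norm v < r \<Longrightarrow>
      \<bar>f ((xb, yb) + v) - f (xb, yb) - g (xb, yb) \<bullet> v - H v \<bullet> v / 2\<bar> \<le> c / 2 * (norm v)\<^sup>2"
    using twice_diff_with_taylor[OF twice, of "c / 2"] c(1) by auto
  have "f (xb, y) \<le> f (xb, yb)" if y: "norm (y - yb) < r" for y
  proof -
    have "norm (0::'a, y - yb) < r" using y by (simp add: norm_Pair)
    from r(2)[OF this] have "\<bar>f (xb, y) - f (xb, yb) - hess_yy H (y - yb) \<bullet> (y - yb) / 2\<bar>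
        \<le> c / 2 * (norm (y - yb))\<^sup>2"
      by (simp add: g0 hess_yy_def inner_Pair_0 norm_Pair)
    hence "f (xb, y) - f (xb, yb) - hess_yy H (y - yb) \<bullet> (y - yb) / 2 \<le> c / 2 * (norm (y - yb))\<^sup>2"
      by (rule abs_le_D1)
    thus ?thesis using c(2)[of "y - yb"] by simp
  qed
  thus ?thesis using r(1) by blast
qed

definition has_calm_response ::
  "('a::real_normed_vector \<times> 'b::real_normed_vector \<Rightarrow> real) \<Rightarrow> 'a \<Rightarrow> 'b \<Rightarrow> bool" where
  "has_calm_response f xb yb \<longleftrightarrow> (\<exists>R>0. \<exists>r>0. \<forall>u. norm u < r \<longrightarrow>
     (\<exists>h. norm h \<le> R * norm u \<and> f (xb, yb) \<le> f (xb + u, yb + h)))"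

lemma has_calm_response_if_pos_in_some_direction:
  fixes f :: "'a::euclidean_space \<times> 'b::euclidean_space \<Rightarrow> real"
  assumes twice: "twice_diff_with f (xb, yb) g H" and g0: "g (xb, yb) = 0"
    and pos: "\<And>u. u \<noteq> 0 \<Longrightarrow> \<exists>h. 0 < H (u, h) \<bullet> (u, h)"
  shows "has_calm_response f xb yb"
proof -
  from twice_diff_with_bounded_linear[OF twice] obtain c R where c: "c > 0" and R: "R > 0"
    and cR: "\<And>u. \<exists>h. norm h \<le> R * norm u \<and> c * (norm u)\<^sup>2 \<le> H (u, h) \<bullet> (u, h)"
    using pos_in_some_direction_uniform[OF _ pos] by blast
  have "1 + R\<^sup>2 > 0" by (simp add: add_pos_nonneg)
  hence "1 + R\<^sup>2 \<noteq> 0" by simp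
  define \<epsilon> where "\<epsilon> = c / (2 * (1 + R\<^sup>2))"
  have \<epsilon>: "\<epsilon> > 0" using c \<open>1 + R\<^sup>2 > 0\<close> by (simp add: \<epsilon>_def)
  obtain r where r: "r > 0" "\<And>v. norm v < r \<Longrightarrow>
      \<bar>f ((xb, yb) + v) - f (xb, yb) - g (xb, yb) \<bullet> v - H v \<bullet> v / 2\<bar> \<le> \<epsilon> * (norm v)\<^sup>2"
    using twice_diff_with_taylor[OF twice \<epsilon>] by blast
  have "\<exists>h. norm h \<le> R * norm u \<and> f (xb, yb) \<le> f (xb + u, yb + h)"
    if u: "norm u < r / (1 + R)" for u
  proof -
    obtain h where h: "norm h \<le> R * norm u" "c * (norm u)\<^sup>2 \<le> H (u, h) \<bullet> (u, h)"
      using cR by blast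
    have "norm (u, h) \<le> (1 + R) * norm u" using norm_Pair_le[of u h] h(1) by (simp add: algebra_simps)
    also have "\<dots> < r" using u R by (simp add: field_simps)
    finally have "\<bar>f (xb + u, yb + h) - f (xb, yb) - H (u, h) \<bullet> (u, h) / 2\<bar> \<le> \<epsilon> * (norm (u, h))\<^sup>2"
      using r(2) g0 by fastforce
    note taylor = abs_le_D2[OF this]
    have "(norm (u, h))\<^sup>2 \<le> (1 + R\<^sup>2) * (norm u)\<^sup>2"
      using power_mono[OF h(1)] by (simp add: norm_Pair algebra_simps power_mult_distrib)
    hence "\<epsilon> * (norm (u, h))\<^sup>2 \<le> \<epsilon> * ((1 + R\<^sup>2) * (norm u)\<^sup>2)"
      using \<epsilon> by (intro mult_left_mono) auto
    also have "\<dots> = c / 2 * (norm u)\<^sup>2"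
      unfolding \<epsilon>_def using \<open>1 + R\<^sup>2 \<noteq> 0\<close> by (simp add: field_simps)
    finally have "f (xb, yb) \<le> f (xb + u, yb + h)" using taylor h(2) by linarith
    thus ?thesis using h(1) by blast
  qed
  moreover have "r / (1 + R) > 0" using r R by simp
  ultimately show ?thesis unfolding has_calm_response_def using R by blast
qed

lemma calm_local_minimax_if_second_order_sufficient:
  fixes f :: "'a::euclidean_space \<times> 'b::euclidean_space \<Rightarrow> real"
  assumes attained: "\<And>x yc \<epsilon>. \<epsilon> \<ge> 0 \<Longrightarrow>
             \<exists>y\<in>cball yc \<epsilon>. \<forall>y'\<in>cball yc \<epsilon>. f (x, y') \<le> f (x, y)"
    and twice: "twice_diff_with f (xb, yb) g H" and g0: "g (xb, yb) = 0"
    and neg: "neg_definite (hess_yy H)"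
    and pos: "\<And>u. u \<noteq> 0 \<Longrightarrow> \<exists>h. 0 < H (u, h) \<bullet> (u, h)"
  shows "calm_local_minimax f xb yb"
proof -
  obtain r1 where r1: "r1 > 0" "\<And>y. norm (y - yb) < r1 \<Longrightarrow> f (xb, y) \<le> f (xb, yb)"
    using local_max_y_if_neg_definite[OF twice g0 neg] by blast
  obtain R r2 where R: "R > 0" and r2: "r2 > 0"
    and resp: "\<And>u. norm u < r2 \<Longrightarrow> \<exists>h. norm h \<le> R * norm u \<and> f (xb, yb) \<le> f (xb + u, yb + h)"
    using has_calm_response_if_pos_in_some_direction[OF twice g0 pos]
    unfolding has_calm_response_def by blast
  show ?thesis unfolding calm_local_minimax_def
  proof (intro exI[of _ "min r1 r2 / 2"] exI[of _ "\<lambda>\<delta>. R * \<delta>"] conjI ballI)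
    show "radius_function (\<lambda>\<delta>. R * \<delta>)"
      unfolding radius_function_def using R by (auto intro!: tendsto_mult_right_zero tendsto_ident_at)
    show "calm_at_0 (\<lambda>\<delta>. R * \<delta>)"
      unfolding calm_at_0_def using R by (intro exI[of _ R] exI[of _ 1]) auto
    fix \<delta> x y assume \<delta>: "\<delta> \<in> {0<..min r1 r2 / 2}" and x: "x \<in> cball xb \<delta>" and y: "y \<in> cball yb \<delta>"
    show "f (xb, y) \<le> f (xb, yb)"
      using r1(2)[of y] y \<delta> by (simp add: dist_norm norm_minus_commute)
    obtain h where h: "norm h \<le> R * norm (x - xb)" "f (xb, yb) \<le> f (x, yb + h)"
      using resp[of "x - xb"] x \<delta> by (auto simp: dist_norm norm_minus_commute)
    have "norm (x - xb) \<le> \<delta>" using x by (simp add: dist_norm norm_minus_commute)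
    hence "norm h \<le> R * \<delta>" using h(1) R by (meson mult_left_mono order_trans less_imp_le)
    moreover obtain ym where "ym \<in> cball yb (R * \<delta>)" "\<forall>y'\<in>cball yb (R * \<delta>). f (x, y') \<le> f (x, ym)"
      using attained[where x = x and yc = yb and \<epsilon> = "R * \<delta>"] R \<delta> by auto
    ultimately have "f (x, yb + h) \<le> (SUP y'\<in>cball yb (R * \<delta>). f (x, y'))"
      by (intro cSUP_upper) (auto simp: dist_norm bdd_above_def)
    with h(2) show "f (xb, yb) \<le> (SUP y'\<in>cball yb (R * \<delta>). f (x, y'))" by simp
  qed (use r1 r2 in auto)
qed

lemma calm_local_minimax_local_max_y:
  assumes "calm_local_minimax f xb yb"
  shows "\<exists>r>0. \<forall>y\<in>cball yb r. f (xb, y) \<le> f (xb, yb)"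
proof -
  obtain \<delta>0 \<tau> where "\<delta>0 > 0" and P: "\<forall>\<delta>\<in>{0<..\<delta>0}. \<forall>x\<in>cball xb \<delta>. \<forall>y\<in>cball yb \<delta>.
      f (xb, y) \<le> f (xb, yb) \<and> f (xb, yb) \<le> (SUP y'\<in>cball yb (\<tau> \<delta>). f (x, y'))"
    using assms unfolding calm_local_minimax_def by blast
  thus ?thesis using P[rule_format, of \<delta>0 xb] by auto
qed

lemma calm_local_minimax_has_calm_response:
  fixes f :: "'a::euclidean_space \<times> 'b::euclidean_space \<Rightarrow> real"
  assumes attained: "\<And>x yc \<epsilon>. \<epsilon> \<ge> 0 \<Longrightarrow>
             \<exists>y\<in>cball yc \<epsilon>. \<forall>y'\<in>cball yc \<epsilon>. f (x, y') \<le> f (x, y)"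
    and calm: "calm_local_minimax f xb yb"
  shows "has_calm_response f xb yb"
proof -
  obtain \<delta>0 \<tau> where \<delta>0: "\<delta>0 > 0" and \<tau>: "radius_function \<tau>" and "calm_at_0 \<tau>"
    and P: "\<forall>\<delta>\<in>{0<..\<delta>0}. \<forall>x\<in>cball xb \<delta>. \<forall>y\<in>cball yb \<delta>.
      f (xb, y) \<le> f (xb, yb) \<and> f (xb, yb) \<le> (SUP y'\<in>cball yb (\<tau> \<delta>). f (x, y'))"
    using calm unfolding calm_local_minimax_def by blast
  then obtain \<kappa> \<delta>1 where \<kappa>: "\<kappa> > 0" and \<delta>1: "\<delta>1 > 0"
    and calm_\<tau>: "\<And>\<delta>. \<delta> \<in> {0..\<delta>1} \<Longrightarrow> \<tau> \<delta> \<le> \<kappa> * \<delta>"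
    unfolding calm_at_0_def by blast
  have "\<exists>h. norm h \<le> \<kappa> * norm u \<and> f (xb, yb) \<le> f (xb + u, yb + h)" if u: "norm u < min \<delta>0 \<delta>1" for u
  proof (cases "u = 0")
    case False
    have \<delta>: "norm u \<in> {0<..\<delta>0}" "norm u \<in> {0..\<delta>1}" using u False by auto
    have "\<tau> (norm u) \<ge> 0" using \<tau> \<delta> unfolding radius_function_def by auto
    then obtain ym where ym: "ym \<in> cball yb (\<tau> (norm u))"
      "\<forall>y'\<in>cball yb (\<tau> (norm u)). f (xb + u, y') \<le> f (xb + u, ym)"
      using attained by blast
    have "f (xb, yb) \<le> (SUP y'\<in>cball yb (\<tau> (norm u)). f (xb + u, y'))"
      using P[rule_format, OF \<delta>(1), of "xb + u" yb] by (simp add: dist_norm)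
    also have "\<dots> = f (xb + u, yb + (ym - yb))" using ym by (intro cSup_eq_maximum) auto
    finally show ?thesis
      using ym(1) calm_\<tau>[OF \<delta>(2)] by (intro exI[of _ "ym - yb"]) (simp add: dist_norm norm_minus_commute)
  qed simp
  moreover have "min \<delta>0 \<delta>1 > 0" using \<delta>0 \<delta>1 by simp
  ultimately show ?thesis unfolding has_calm_response_def using \<kappa> by blast
qed

lemma has_calm_response_min_along_rays:
  fixes f :: "'a::euclidean_space \<times> 'b::euclidean_space \<Rightarrow> real"
  assumes "has_calm_response f xb yb"
  shows "\<exists>R\<ge>0. \<forall>u. \<forall>\<^sub>F t in at_right 0.
           \<exists>v\<in>{u} \<times> cball 0 (R * norm u). f (xb, yb) \<le> f ((xb, yb) + t *\<^sub>R v)"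
proof -
  obtain R r where R: "R > 0" and r: "r > 0"
    and resp: "\<And>u. norm u < r \<Longrightarrow> \<exists>h. norm h \<le> R * norm u \<and> f (xb, yb) \<le> f (xb + u, yb + h)"
    using assms unfolding has_calm_response_def by blast
  have "\<forall>\<^sub>F t in at_right 0. \<exists>v\<in>{u} \<times> cball 0 (R * norm u). f (xb, yb) \<le> f ((xb, yb) + t *\<^sub>R v)"
    for u
  proof (rule eventually_at_rightI[of 0 "r / (norm u + 1)"])
    fix t assume t: "t \<in> {0<..<r / (norm u + 1)}"
    have "t * norm u \<le> t * (norm u + 1)" using t by simp
    also have "\<dots> < r" using t by (simp add: field_simps add_pos_nonneg)
    finally obtain h where h: "norm h \<le> R * (t * norm u)" "f (xb, yb) \<le> f (xb + t *\<^sub>R u, yb + h)"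
      using resp[of "t *\<^sub>R u"] t by auto
    have "norm ((1 / t) *\<^sub>R h) \<le> R * norm u" using h(1) t unfolding norm_scaleR by (simp add: field_simps)
    moreover have "(xb, yb) + t *\<^sub>R (u, (1 / t) *\<^sub>R h) = (xb + t *\<^sub>R u, yb + h)" using t by simp
    ultimately show "\<exists>v\<in>{u} \<times> cball 0 (R * norm u). f (xb, yb) \<le> f ((xb, yb) + t *\<^sub>R v)"
      using h(2) by (intro bexI[of _ "(u, (1 / t) *\<^sub>R h)"]) auto
  qed (use r in \<open>auto intro!: divide_pos_pos add_nonneg_pos\<close>)
  thus ?thesis using R by (intro exI[of _ R]) auto
qed

lemma calm_local_minimax_necessary_y:
  fixes f :: "'a::euclidean_space \<times> 'b::euclidean_space \<Rightarrow> real"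
  assumes twice: "twice_diff_with f (xb, yb) g H" and calm: "calm_local_minimax f xb yb"
  shows "snd (g (xb, yb)) = 0 \<and> neg_semidefinite (hess_yy H)"
proof -
  obtain r where r: "r > 0" "\<And>y. y \<in> cball yb r \<Longrightarrow> f (xb, y) \<le> f (xb, yb)"
    using calm_local_minimax_local_max_y[OF calm] by blast
  \<comment> \<open>A local maximum of f in y is a local minimum of -f along every ray (0, h).\<close>
  have ray_min: "\<forall>\<^sub>F t in at_right 0. \<exists>v\<in>{(0, h)}. - f (xb, yb) \<le> - f ((xb, yb) + t *\<^sub>R v)" for h
  proof (rule eventually_at_rightI[of 0 "r / (norm h + 1)"])
    fix t assume t: "t \<in> {0<..<r / (norm h + 1)}"
    have "t * norm h \<le> t * (norm h + 1)" using t by simp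
    also have "\<dots> < r" using t by (simp add: field_simps add_pos_nonneg)
    finally show "\<exists>v\<in>{(0, h)}. - f (xb, yb) \<le> - f ((xb, yb) + t *\<^sub>R v)"
      using r(2)[of "yb + t *\<^sub>R h"] t by (simp add: dist_norm)
  qed (use r in \<open>auto intro!: divide_pos_pos add_nonneg_pos\<close>)
  note neg = twice_diff_with_uminus[OF twice]
  have "0 \<le> - g (xb, yb) \<bullet> (0, h)" for h
    using min_along_rays_first_order[OF neg compact_sing _ ray_min] by simp
  from this[of "snd (g (xb, yb))"]
  have "snd (g (xb, yb)) \<bullet> snd (g (xb, yb)) \<le> 0" by (simp add: inner_Pair_0)
  hence gy: "snd (g (xb, yb)) = 0" using inner_gt_zero_iff not_le by blast
  have "0 \<le> - H (0, h) \<bullet> (0, h)" for h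
    using min_along_rays_second_order[OF neg compact_sing _ _ ray_min] gy by (simp add: inner_Pair_0)
  thus ?thesis using gy by (simp add: neg_semidefinite_def hess_yy_def inner_Pair_0)
qed

lemma has_calm_response_necessary_x:
  fixes f :: "'a::euclidean_space \<times> 'b::euclidean_space \<Rightarrow> real"
  assumes twice: "twice_diff_with f (xb, yb) g H" and resp: "has_calm_response f xb yb"
    and gy: "snd (g (xb, yb)) = 0"
  shows "fst (g (xb, yb)) = 0 \<and> (\<forall>u. \<exists>h. 0 \<le> H (u, h) \<bullet> (u, h))"
proof -
  obtain \<kappa> where \<kappa>: "\<kappa> \<ge> 0" and ray_min: "\<And>u. \<forall>\<^sub>F t in at_right 0.
      \<exists>v\<in>{u} \<times> cball 0 (\<kappa> * norm u). f (xb, yb) \<le> f ((xb, yb) + t *\<^sub>R v)"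
    using has_calm_response_min_along_rays[OF resp] by blast
  have K: "compact ({u} \<times> cball (0::'b) (\<kappa> * norm u))" "{u} \<times> cball (0::'b) (\<kappa> * norm u) \<noteq> {}"
    for u :: 'a
    using \<kappa> by (auto intro!: compact_Times compact_cball simp: mult_less_0_iff)
  have g_pair: "g (xb, yb) \<bullet> (u, h) = fst (g (xb, yb)) \<bullet> u" for u h
    using gy by (metis add.right_neutral inner_Pair inner_zero_left prod.collapse)
  have "0 \<le> fst (g (xb, yb)) \<bullet> u" for u
    using min_along_rays_first_order[OF twice K ray_min] by (auto simp: g_pair)
  from this[of "- fst (g (xb, yb))"] have gx: "fst (g (xb, yb)) = 0"
    using inner_gt_zero_iff not_le by fastforce
  have "g (xb, yb) \<bullet> v = 0" for v using gx g_pair[of "fst v" "snd v"] by simp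
  hence "\<exists>v\<in>{u} \<times> cball 0 (\<kappa> * norm u). 0 \<le> H v \<bullet> v" for u
    by (rule min_along_rays_second_order[OF twice K _ ray_min])
  hence "\<exists>h. 0 \<le> H (u, h) \<bullet> (u, h)" for u by blast
  thus ?thesis using gx by blast
qed

theorem mainTheorem15:
  fixes f :: "'a::euclidean_space \<times> 'b::euclidean_space \<Rightarrow> real"
    and xb :: 'a and yb :: 'b
    and g H :: "'a \<times> 'b \<Rightarrow> 'a \<times> 'b"
  assumes attained: "\<And>x yc \<epsilon>. \<epsilon> \<ge> 0 \<Longrightarrow>
             \<exists>y\<in>cball yc \<epsilon>. \<forall>y'\<in>cball yc \<epsilon>. f (x, y') \<le> f (x, y)"
    and twice: "twice_diff_with f (xb, yb) g H"
  shows "(g (xb, yb) = 0 \<and> neg_definite (hess_yy H) \<and>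
            (\<forall>u. u \<noteq> 0 \<longrightarrow> (\<exists>h. H (u, h) \<bullet> (u, h) > 0))
          \<longrightarrow> calm_local_minimax f xb yb)
       \<and> (calm_local_minimax f xb yb \<longrightarrow>
            g (xb, yb) = 0 \<and> neg_semidefinite (hess_yy H) \<and>
            (\<forall>u. \<exists>h. H (u, h) \<bullet> (u, h) \<ge> 0))"
proof (rule conjI; rule impI)
  show "calm_local_minimax f xb yb"
    if "g (xb, yb) = 0 \<and> neg_definite (hess_yy H) \<and> (\<forall>u. u \<noteq> 0 \<longrightarrow> (\<exists>h. H (u, h) \<bullet> (u, h) > 0))"
    using calm_local_minimax_if_second_order_sufficient[OF attained twice] that by blast
next
  assume calm: "calm_local_minimax f xb yb"
  from calm_local_minimax_necessary_y[OF twice calm]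
  have gy: "snd (g (xb, yb)) = 0" and nsd: "neg_semidefinite (hess_yy H)" by auto
  from has_calm_response_necessary_x[OF twice calm_local_minimax_has_calm_response[OF attained calm] gy]
  have gx: "fst (g (xb, yb)) = 0" and psd: "\<forall>u. \<exists>h. H (u, h) \<bullet> (u, h) \<ge> 0" by auto
  show "g (xb, yb) = 0 \<and> neg_semidefinite (hess_yy H) \<and> (\<forall>u. \<exists>h. H (u, h) \<bullet> (u, h) \<ge> 0)"
    using gx gy nsd psd by (simp add: prod_eq_iff)
qed

end
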